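(* For each prime power $q$ there exists a $q^2$-divisible set $\mathcal{C}$ of points in a projective space over $\mathbb{F}_q$ with $|\mathcal{C}|=3q^3-q^2-q-1$ whose span has dimension $k$ satisfying $\max\{8,q+5\}\le k\le\max\{8,2q+3\}$.
   Context: Points are $1$-dimensional subspaces of $\mathbb{F}_q^v$. A set $\mathcal{C}$ of points is $\Delta$-divisible if there is an integer $u$ with $|\mathcal{C}\cap H|\equiv u\pmod{\Delta}$ for every hyperplane $H$ of $\mathbb{F}_q^v$, where $\mathcal{C}\cap H$ is the set of points of $\mathcal{C}$ contained in $H$. *)

theory Defs
  imports Complex_Main "HOL-Number_Theory.Cong" "HOL-Library.Function_Algebras"
begin

text \<open>Vectors of F^v are modelled as functions nat => F vanishing outside {0..<v};
  the field F is a finite field type, F = F_q with q = CARD(F).\<close>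

definition fscale :: "'a::field \<Rightarrow> (nat \<Rightarrow> 'a) \<Rightarrow> (nat \<Rightarrow> 'a)" where
  "fscale c x = (\<lambda>i. c * x i)"

lemma vector_space_fscale: "vector_space (fscale :: 'a::field \<Rightarrow> _)"
  by unfold_locales (simp_all add: fscale_def algebra_simps fun_eq_iff)

definition ambient :: "nat \<Rightarrow> (nat \<Rightarrow> 'a::field) set" where
  "ambient v = {x. \<forall>i\<ge>v. x i = 0}"

definition is_subspace :: "(nat \<Rightarrow> 'a::field) set \<Rightarrow> bool" where
  "is_subspace S = module.subspace (fscale :: 'a \<Rightarrow> _) S"

definition fdim :: "(nat \<Rightarrow> 'a::field) set \<Rightarrow> nat" where
  "fdim S = vector_space.dim (fscale :: 'a \<Rightarrow> _) S"

definition points :: "nat \<Rightarrow> (nat \<Rightarrow> 'a::field) set set" where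
  "points v = {P. P \<subseteq> ambient v \<and> is_subspace P \<and> fdim P = 1}"

definition hyperplanes :: "nat \<Rightarrow> (nat \<Rightarrow> 'a::field) set set" where
  "hyperplanes v = {H. H \<subseteq> ambient v \<and> is_subspace H \<and> fdim H = v - 1}"

definition divisible :: "nat \<Rightarrow> int \<Rightarrow> (nat \<Rightarrow> 'a::field) set set \<Rightarrow> bool" where
  "divisible v \<Delta> C = (\<exists>u::int. \<forall>H \<in> hyperplanes v.
      [int (card {P \<in> C. P \<subseteq> H}) = u] (mod \<Delta>))"

end

(* The nonzero vectors of the point set are the union of three pieces of coordinate
   subspaces of F_q^(q+7): q - 1 planes through a common line L with L removed, a solid S
   through L with a plane of S and L removed, and a solid T meeting S in a point P of L with a
   plane of T and P removed.  Counting vectors rather than points, a k-dimensional coordinate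
   subspace meets every hyperplane in q^k or q^(k-1) vectors, so in q^2 Z when k >= 3.  By
   inclusion-exclusion the number of vectors of the set in a hyperplane H is a sum of such
   counts, except that L enters with coefficient -q and the zero subspace with coefficient 1;
   hence it is 1 mod q^2.  Dividing by the q - 1 vectors per point, the number of points in H
   is -(q + 1) mod q^2. *)

theory Submission
  imports Defs "HOL-Library.FuncSet" "HOL-Library.Indicator_Function"
begin

lemma (in vector_space) span_insert_eq_of_card_le_Suc_dim:
  assumes H: "subspace H" "H \<subseteq> span E" and E: "finite E" "card E \<le> dim H + 1"
    and y: "y \<in> span E" "y \<notin> H"
  shows "span (insert y H) = span E"
proof
  show "span (insert y H) \<subseteq> span E"
    using H(2) y(1) by (simp add: span_minimal)
  show "span E \<subseteq> span (insert y H)"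
  proof
    fix z assume z: "z \<in> span E"
    obtain B where B: "B \<subseteq> H" "independent B" "H \<subseteq> span B" "card B = dim H"
      using basis_exists by blast
    have "finite B"
      using independent_span_bound[OF E(1) B(2)] B(1) H(2) by blast
    have "span B = H"
      using B H(1) span_subspace by blast
    show "z \<in> span (insert y H)"
    proof (rule ccontr)
      \<comment> \<open>otherwise a basis of H, y and z would be dim H + 2 independent vectors in span E\<close>
      assume "z \<notin> span (insert y H)"
      then have z_new: "z \<notin> span (insert y B)"
        using span_mono[of "insert y B" "insert y H"] B(1) by blast
      have y_new: "y \<notin> span B"
        using \<open>span B = H\<close> y(2) by simp
      have "independent (insert z (insert y B))"
        by (intro independent_insertI z_new y_new B(2))
      moreover have "insert z (insert y B) \<subseteq> span E"
        using z y(1) B(1) H(2) by blast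
      ultimately have "card (insert z (insert y B)) \<le> card E"
        using independent_span_bound[OF E(1)] by blast
      moreover have "card (insert z (insert y B)) = dim H + 2"
      proof -
        have "y \<notin> B" "z \<notin> insert y B"
          using y_new z_new span_base by blast+
        then show ?thesis
          using \<open>finite B\<close> B(4) by simp
      qed
      ultimately show False
        using E(2) by simp
    qed
  qed
qed

lemma (in vector_space) dim_Union_span_singleton:
  "dim (\<Union>x\<in>V. span {x}) = dim V"
proof (rule span_eq_dim)
  have "V \<subseteq> (\<Union>x\<in>V. span {x})"
    using span_base by blast
  moreover have "(\<Union>x\<in>V. span {x}) \<subseteq> span V"
    by (intro UN_least span_mono) simp
  ultimately show "span (\<Union>x\<in>V. span {x}) = span V"
    by (simp add: span_eq span_superset subset_trans)
qed

lemma (in vector_space) span_singleton_eq: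
  assumes "y \<in> span {x}" "y \<noteq> 0"
  shows "span {y} = span {x}"
proof -
  obtain c where c: "y = c *s x"
    using assms(1) by (auto simp: span_singleton)
  with assms(2) have "x = inverse c *s y"
    by simp
  then have "x \<in> span {y}"
    by (simp add: span_scale span_base)
  with assms(1) show ?thesis
    by (simp add: span_eq)
qed

lemma (in vector_space) card_span_singleton_minus_zero:
  assumes "x \<noteq> 0"
  shows "card (span {x} - {0}) = card (UNIV :: 'a set) - 1"
proof -
  have "span {x} - {0} = (\<lambda>c. c *s x) ` (UNIV - {0})"
    using assms by (auto simp: span_singleton)
  moreover have "inj (\<lambda>c. c *s x)"
    using assms by (simp add: inj_def)
  ultimately show ?thesis
    by (simp add: card_image inj_on_subset card_Diff_singleton_if)
qed

lemma (in vector_space) card_eq_card_span_singletons: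
  assumes fin: "finite V" and nz: "0 \<notin> V" and closed: "\<And>c x. c \<noteq> 0 \<Longrightarrow> x \<in> V \<Longrightarrow> c *s x \<in> V"
  shows "card V = (card (UNIV :: 'a set) - 1) * card ((\<lambda>x. span {x}) ` V)"
proof -
  have V_eq: "V = (\<Union>P \<in> (\<lambda>x. span {x}) ` V. P - {0})"
  proof
    show "V \<subseteq> (\<Union>P \<in> (\<lambda>x. span {x}) ` V. P - {0})"
      using nz span_base by blast
    show "(\<Union>P \<in> (\<lambda>x. span {x}) ` V. P - {0}) \<subseteq> V"
      using closed by (force simp: span_singleton)
  qed
  have "card (\<Union>P \<in> (\<lambda>x. span {x}) ` V. P - {0}) = (\<Sum>P \<in> (\<lambda>x. span {x}) ` V. card (P - {0}))"
  proof (rule card_UN_disjoint)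
    show "\<forall>P \<in> (\<lambda>x. span {x}) ` V. finite (P - {0})"
      using V_eq fin by (metis UN_upper finite_subset)
    show "\<forall>P \<in> (\<lambda>x. span {x}) ` V. \<forall>Q \<in> (\<lambda>x. span {x}) ` V. P \<noteq> Q \<longrightarrow> (P - {0}) \<inter> (Q - {0}) = {}"
      using span_singleton_eq by blast
  qed (use fin in simp)
  also have "\<dots> = (\<Sum>P \<in> (\<lambda>x. span {x}) ` V. card (UNIV :: 'a set) - 1)"
  proof (rule sum.cong[OF refl])
    fix P assume "P \<in> (\<lambda>x. span {x}) ` V"
    with nz show "card (P - {0}) = card (UNIV :: 'a set) - 1"
      using card_span_singleton_minus_zero by force
  qed
  finally show ?thesis
    using V_eq by simp
qed

lemma (in vector_space) card_inter_subspace_eq_card_span_singletons: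
  assumes "finite V" "0 \<notin> V" "\<And>c x. c \<noteq> 0 \<Longrightarrow> x \<in> V \<Longrightarrow> c *s x \<in> V" and H: "subspace H"
  shows "card (V \<inter> H) = (card (UNIV :: 'a set) - 1) * card {P \<in> (\<lambda>x. span {x}) ` V. P \<subseteq> H}"
proof -
  have "span {x} \<subseteq> H \<longleftrightarrow> x \<in> H" for x
    using H span_base span_minimal[of "{x}" H] by auto
  then have "{P \<in> (\<lambda>x. span {x}) ` V. P \<subseteq> H} = (\<lambda>x. span {x}) ` (V \<inter> H)"
    by auto
  moreover have "card (V \<inter> H) = (card (UNIV :: 'a set) - 1) * card ((\<lambda>x. span {x}) ` (V \<inter> H))"
    using assms subspace_scale by (intro card_eq_card_span_singletons) auto
  ultimately show ?thesis
    by simp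
qed

interpretation fs: vector_space "fscale :: 'a::field \<Rightarrow> (nat \<Rightarrow> 'a) \<Rightarrow> (nat \<Rightarrow> 'a)"
  by (rule vector_space_fscale)

lemma card_UNIV_field_ge_two: "card (UNIV :: 'a::{finite,field} set) \<ge> 2"
proof -
  have "card {0, 1 :: 'a} \<le> card (UNIV :: 'a set)"
    by (rule card_mono) auto
  then show ?thesis
    by simp
qed

definition coord_subspace :: "nat set \<Rightarrow> (nat \<Rightarrow> 'a::zero) set" where
  "coord_subspace I = {x. \<forall>k. k \<notin> I \<longrightarrow> x k = 0}"

lemma ambient_eq_coord_subspace: "ambient v = coord_subspace {..<v}"
  by (auto simp: ambient_def coord_subspace_def)

lemma coord_subspace_mono: "I \<subseteq> J \<Longrightarrow> coord_subspace I \<subseteq> coord_subspace J"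
  by (auto simp: coord_subspace_def)

lemma coord_subspace_Int: "coord_subspace I \<inter> coord_subspace J = coord_subspace (I \<inter> J)"
  by (auto simp: coord_subspace_def)

lemma coord_subspace_empty: "coord_subspace {} = {0}"
  by (auto simp: coord_subspace_def)

lemma zero_in_coord_subspace [simp]: "0 \<in> coord_subspace I"
  by (simp add: coord_subspace_def)

lemma indicator_in_coord_subspace_iff [simp]:
  "(indicator J :: nat \<Rightarrow> 'a::zero_neq_one) \<in> coord_subspace I \<longleftrightarrow> J \<subseteq> I"
  by (auto simp: coord_subspace_def indicator_def)

lemma fscale_in_coord_subspace_iff [simp]:
  "(c::'a::field) \<noteq> 0 \<Longrightarrow> fscale c x \<in> coord_subspace I \<longleftrightarrow> x \<in> coord_subspace I"
  by (auto simp: coord_subspace_def fscale_def)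

lemma subspace_coord_subspace: "fs.subspace (coord_subspace I)"
  by (auto simp: fs.subspace_def coord_subspace_def fscale_def)

lemma span_coord_subspace [simp]: "fs.span (coord_subspace I) = coord_subspace I"
  by (simp add: fs.span_eq_iff subspace_coord_subspace)

lemma card_coord_subspace:
  assumes "finite I"
  shows "card (coord_subspace I :: (nat \<Rightarrow> 'a::{finite,zero}) set) = card (UNIV :: 'a set) ^ card I"
proof -
  have "bij_betw (\<lambda>x. restrict x I) (coord_subspace I) (PiE I (\<lambda>_. UNIV :: 'a set))"
    by (rule bij_betw_byWitness[where f'="\<lambda>f k. if k \<in> I then f k else 0"])
       (auto simp: coord_subspace_def fun_eq_iff PiE_def extensional_def)
  then show ?thesis
    using assms by (simp add: bij_betw_same_card card_PiE)
qed

lemma finite_coord_subspace: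
  "finite I \<Longrightarrow> finite (coord_subspace I :: (nat \<Rightarrow> 'a::{finite,zero}) set)"
  using card_coord_subspace[of I, where 'a='a] by (intro card_ge_0_finite) (simp add: card_gt_0_iff)

lemma sum_fun_apply: "(sum f A) k = (\<Sum>x\<in>A. f x k)"
  by (induction A rule: infinite_finite_induct) auto

lemma span_indicator_singletons:
  assumes "finite I"
  shows "fs.span ((\<lambda>j. indicator {j}) ` I) = (coord_subspace I :: (nat \<Rightarrow> 'a::field) set)"
proof
  show "fs.span ((\<lambda>j. indicator {j}) ` I) \<subseteq> coord_subspace I"
    by (rule fs.span_minimal) (auto simp: subspace_coord_subspace)
  show "coord_subspace I \<subseteq> fs.span ((\<lambda>j. indicator {j} :: nat \<Rightarrow> 'a) ` I)"
  proof
    fix x :: "nat \<Rightarrow> 'a" assume x: "x \<in> coord_subspace I"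
    have "x = (\<Sum>j\<in>I. fscale (x j) (indicator {j}))"
      using x assms
      by (auto simp: fun_eq_iff sum_fun_apply fscale_def indicator_def coord_subspace_def Int_insert_right)
    also have "\<dots> \<in> fs.span ((\<lambda>j. indicator {j}) ` I)"
      by (intro fs.span_sum fs.span_scale fs.span_base) auto
    finally show "x \<in> fs.span ((\<lambda>j. indicator {j}) ` I)" .
  qed
qed

lemma inj_indicator_singleton: "inj (\<lambda>j. indicator {j} :: nat \<Rightarrow> 'a::zero_neq_one)"
  by (rule injI) (metis indicator_simps(1) indicator_simps(2) insertI1 singletonD zero_neq_one)

lemma independent_indicator_singletons:
  assumes "finite I"
  shows "fs.independent ((\<lambda>j. indicator {j}) ` I :: (nat \<Rightarrow> 'a::field) set)"
proof (rule fs.independent_if_scalars_zero)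
  fix f :: "(nat \<Rightarrow> 'a) \<Rightarrow> 'a" and x :: "nat \<Rightarrow> 'a"
  assume sum: "(\<Sum>x\<in>(\<lambda>j. indicator {j}) ` I. fscale (f x) x) = 0"
    and x: "x \<in> (\<lambda>j. indicator {j}) ` I"
  then obtain j where j: "j \<in> I" "x = indicator {j}"
    by auto
  have "0 = (\<Sum>i\<in>I. fscale (f (indicator {i})) (indicator {i})) j"
    using sum by (simp add: sum.reindex inj_on_subset[OF inj_indicator_singleton])
  also have "\<dots> = f x"
    using assms j by (simp add: sum_fun_apply fscale_def indicator_def)
  finally show "f x = 0" ..
qed (use assms in simp)

lemma dim_coord_subspace:
  assumes "finite I"
  shows "fs.dim (coord_subspace I :: (nat \<Rightarrow> 'a::field) set) = card I"
proof -
  have "fs.dim (coord_subspace I :: (nat \<Rightarrow> 'a) set) = card ((\<lambda>j. indicator {j}) ` I :: (nat \<Rightarrow> 'a) set)"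
    using assms by (intro fs.dim_eq_card independent_indicator_singletons) (simp add: span_indicator_singletons)
  also have "\<dots> = card I"
    by (intro card_image inj_on_subset[OF inj_indicator_singleton]) simp
  finally show ?thesis .
qed

lemma hyperplane_span_insert:
  assumes H: "H \<in> hyperplanes v" and y: "y \<in> ambient v" "y \<notin> H"
  shows "fs.span (insert y H) = ambient v"
proof -
  let ?E = "(\<lambda>j. indicator {j}) ` {..<v} :: (nat \<Rightarrow> 'a) set"
  have span_E: "fs.span ?E = ambient v"
    by (simp add: span_indicator_singletons ambient_eq_coord_subspace)
  have "card ?E = v"
    by (simp add: card_image inj_on_subset[OF inj_indicator_singleton])
  with H have "fs.subspace H" "H \<subseteq> fs.span ?E" "card ?E \<le> fs.dim H + 1"
    by (auto simp: hyperplanes_def is_subspace_def fdim_def span_E)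
  then show ?thesis
    using fs.span_insert_eq_of_card_le_Suc_dim[of H ?E y] y span_E by simp
qed

lemma card_subspace_eq_mult_card_inter_hyperplane:
  fixes W :: "(nat \<Rightarrow> 'a::{finite,field}) set"
  assumes H: "H \<in> hyperplanes v" and W: "fs.subspace W" "W \<subseteq> ambient v"
    and y: "y \<in> W" "y \<notin> H"
  shows "card W = card (UNIV :: 'a set) * card (W \<inter> H)"
proof -
  have H_sub: "fs.subspace H"
    using H by (simp add: hyperplanes_def is_subspace_def)
  have cancel: "h = h' \<and> c = c'"
    if h: "h \<in> H" "h' \<in> H" and eq: "h + fscale c y = h' + fscale c' y" for h h' c c'
  proof -
    from eq have diff: "fscale (c - c') y = h' - h"
      by (auto simp: fscale_def fun_eq_iff algebra_simps)
    have "c = c'"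
    proof (rule ccontr)
      assume "c \<noteq> c'"
      then have "y = fscale (inverse (c - c')) (h' - h)"
        by (simp add: diff[symmetric])
      also have "\<dots> \<in> H"
        using h H_sub by (simp add: fs.subspace_diff fs.subspace_scale)
      finally show False
        using y(2) by simp
    qed
    with diff show ?thesis
      by simp
  qed
  have decompose: "\<exists>c. w - fscale c y \<in> W \<inter> H" if w: "w \<in> W" for w
  proof -
    have "w \<in> fs.span (insert y H)"
      using hyperplane_span_insert[OF H] W(2) w y by blast
    then obtain c where "w - fscale c y \<in> H"
      using H_sub by (auto simp: fs.span_breakdown_eq fs.span_eq_iff[THEN iffD2, OF H_sub])
    moreover have "w - fscale c y \<in> W"
      using W(1) w y(1) by (intro fs.subspace_diff fs.subspace_scale)
    ultimately show ?thesis
      by blast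
  qed
  have "bij_betw (\<lambda>(h, c). h + fscale c y) ((W \<inter> H) \<times> UNIV) W"
    unfolding bij_betw_def
  proof
    show "inj_on (\<lambda>(h, c). h + fscale c y) ((W \<inter> H) \<times> UNIV)"
      using cancel by (auto simp: inj_on_def)
    show "(\<lambda>(h, c). h + fscale c y) ` ((W \<inter> H) \<times> UNIV) = W"
    proof
      show "(\<lambda>(h, c). h + fscale c y) ` ((W \<inter> H) \<times> UNIV) \<subseteq> W"
        using W(1) y(1) by (auto intro: fs.subspace_add fs.subspace_scale)
      show "W \<subseteq> (\<lambda>(h, c). h + fscale c y) ` ((W \<inter> H) \<times> UNIV)"
      proof
        fix w assume "w \<in> W"
        then obtain c where "w - fscale c y \<in> W \<inter> H"
          using decompose by blast
        then show "w \<in> (\<lambda>(h, c). h + fscale c y) ` ((W \<inter> H) \<times> UNIV)"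
          by (intro image_eqI[of _ _ "(w - fscale c y, c)"]) auto
      qed
    qed
  qed
  then have "card W = card ((W \<inter> H) \<times> (UNIV :: 'a set))"
    by (simp add: bij_betw_same_card)
  then show ?thesis
    by (simp add: card_cartesian_product)
qed

lemma card_power_dvd_card_coord_subspace_inter_hyperplane:
  fixes H :: "(nat \<Rightarrow> 'a::{finite,field}) set"
  assumes H: "H \<in> hyperplanes v" and I: "finite I" "I \<subseteq> {..<v}"
  shows "card (UNIV :: 'a set) ^ (card I - 1) dvd card (coord_subspace I \<inter> H)"
proof (cases "coord_subspace I \<subseteq> H")
  case True
  then show ?thesis
    using I(1) by (simp add: Int_absorb2 card_coord_subspace le_imp_power_dvd)
next
  case False
  then obtain y where y: "y \<in> coord_subspace I" "y \<notin> H"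
    by blast
  have "0 \<in> H"
    using H by (simp add: hyperplanes_def is_subspace_def fs.subspace_0)
  then have "I \<noteq> {}"
    using False by (auto simp: coord_subspace_empty)
  then obtain k where k: "card I = Suc k"
    using I(1) by (metis card_0_eq not0_implies_Suc)
  have "coord_subspace I \<subseteq> ambient v"
    using I(2) by (simp add: ambient_eq_coord_subspace coord_subspace_mono)
  then have "card (coord_subspace I :: (nat \<Rightarrow> 'a) set) = card (UNIV :: 'a set) * card (coord_subspace I \<inter> H)"
    using card_subspace_eq_mult_card_inter_hyperplane[OF H subspace_coord_subspace _ y] by blast
  then have "card (coord_subspace I \<inter> H) = card (UNIV :: 'a set) ^ k"
    using I(1) k by (simp add: card_coord_subspace)
  then show ?thesis
    using k by simp
qed

lemma span_singletons_subset_points: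
  assumes "V \<subseteq> ambient v" "0 \<notin> V"
  shows "(\<lambda>x. fs.span {x}) ` V \<subseteq> points v"
proof
  fix P assume "P \<in> (\<lambda>x. fs.span {x}) ` V"
  then obtain x where x: "x \<in> V" "P = fs.span {x}"
    by blast
  have "fs.span {x} \<subseteq> ambient v"
    using assms(1) x(1) subspace_coord_subspace
    by (intro fs.span_minimal) (auto simp: ambient_eq_coord_subspace)
  moreover have "x \<noteq> 0"
    using assms(2) x(1) by blast
  then have "fs.dim (fs.span {x}) = 1"
    by (simp add: fs.dim_eq_card_independent fs.independent_insert fs.span_empty)
  ultimately show "P \<in> points v"
    using x(2) by (simp add: points_def is_subspace_def fdim_def fs.subspace_span)
qed

lemma divisible_span_singletons:
  fixes V :: "(nat \<Rightarrow> 'a::{finite,field}) set"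
  assumes V: "finite V" "0 \<notin> V" "\<And>c x. c \<noteq> 0 \<Longrightarrow> x \<in> V \<Longrightarrow> fscale c x \<in> V"
    and cong: "\<And>H. H \<in> hyperplanes v \<Longrightarrow> [int (card (V \<inter> H)) = 1] (mod int (card (UNIV :: 'a set)) ^ 2)"
  shows "divisible v (int (card (UNIV :: 'a set)) ^ 2) ((\<lambda>x. fs.span {x}) ` V)"
  unfolding divisible_def
proof (intro exI ballI)
  let ?q = "int (card (UNIV :: 'a set))"
  fix H :: "(nat \<Rightarrow> 'a) set" assume H: "H \<in> hyperplanes v"
  define N where "N = int (card {P \<in> (\<lambda>x. fs.span {x}) ` V. P \<subseteq> H})"
  have "card (UNIV :: 'a set) \<ge> 1"
    by (simp add: Suc_leI card_gt_0_iff)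
  moreover have "card (V \<inter> H) = (card (UNIV :: 'a set) - 1) * card {P \<in> (\<lambda>x. fs.span {x}) ` V. P \<subseteq> H}"
    using H V by (intro fs.card_inter_subspace_eq_card_span_singletons) (auto simp: hyperplanes_def is_subspace_def)
  ultimately have "int (card (V \<inter> H)) = (?q - 1) * N"
    by (simp add: N_def of_nat_diff)
  with cong[OF H] have "?q ^ 2 dvd (?q - 1) * N - 1"
    by (simp add: cong_iff_dvd_diff dvd_diff_commute)
  then have "?q ^ 2 dvd - (?q + 1) * ((?q - 1) * N - 1) + ?q ^ 2 * N"
    by simp
  also have "- (?q + 1) * ((?q - 1) * N - 1) + ?q ^ 2 * N = N - - (?q + 1)"
    by (simp add: algebra_simps power2_eq_square)
  \<comment> \<open>since (q - 1) * -(q + 1) = 1 - q^2\<close>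
  finally show "[int (card {P \<in> (\<lambda>x. fs.span {x}) ` V. P \<subseteq> H}) = - (?q + 1)] (mod ?q ^ 2)"
    by (simp add: N_def cong_iff_dvd_diff)
qed

abbreviation coord_count :: "(nat \<Rightarrow> 'a::zero) set \<Rightarrow> nat set \<Rightarrow> int" where
  "coord_count H I \<equiv> int (card (coord_subspace I \<inter> H))"

lemma card_Diff_Un_of_subsets:
  assumes "finite A" "B \<subseteq> A" "C \<subseteq> A"
  shows "int (card (A - (B \<union> C))) = int (card A) - int (card B) - int (card C) + int (card (B \<inter> C))"
proof -
  have "finite B" "finite C"
    using assms finite_subset by blast+
  then have "card (B \<union> C) + card (B \<inter> C) = card B + card C"
    using card_Un_Int[of B C] by simp
  moreover have "card (A - (B \<union> C)) = card A - card (B \<union> C)"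
    using assms by (intro card_Diff_subset) (auto intro: finite_subset)
  moreover have "card (B \<union> C) \<le> card A"
    using assms by (intro card_mono) auto
  ultimately show ?thesis
    by linarith
qed

lemma card_coord_subspace_Diff_inter:
  fixes H :: "(nat \<Rightarrow> 'a::{finite,field}) set"
  assumes "finite I" "J \<subseteq> I" "K \<subseteq> I"
  shows "int (card ((coord_subspace I - (coord_subspace J \<union> coord_subspace K)) \<inter> H))
    = coord_count H I - coord_count H J - coord_count H K + coord_count H (J \<inter> K)"
proof -
  have "(coord_subspace I - (coord_subspace J \<union> coord_subspace K)) \<inter> H
      = (coord_subspace I \<inter> H) - ((coord_subspace J \<inter> H) \<union> (coord_subspace K \<inter> H))"
    by blast
  moreover have "int (card ((coord_subspace I \<inter> H) - ((coord_subspace J \<inter> H) \<union> (coord_subspace K \<inter> H))))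
      = coord_count H I - coord_count H J - coord_count H K
        + int (card ((coord_subspace J \<inter> H) \<inter> (coord_subspace K \<inter> H)))"
    using assms coord_subspace_mono[of J I] coord_subspace_mono[of K I]
    by (intro card_Diff_Un_of_subsets) (auto simp: finite_coord_subspace)
  moreover have "(coord_subspace J \<inter> H) \<inter> (coord_subspace K \<inter> H) = coord_subspace (J \<inter> K) \<inter> H"
    by (auto simp: coord_subspace_Int[symmetric])
  ultimately show ?thesis
    by simp
qed

text \<open>Coordinate 0 is unused: the planes through the line L = coord_subspace {n, n+1} are
  indexed by i = 1, ..., n - 1, and the set spans the coordinates 1, ..., n + 6.\<close>
definition example_vectors :: "nat \<Rightarrow> (nat \<Rightarrow> 'a::field) set" where
  "example_vectors n =
     (\<Union>i\<in>{1..<n}. coord_subspace {i, n, n+1} - coord_subspace {n, n+1})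
     \<union> (coord_subspace {n, n+1, n+2, n+3} - (coord_subspace {n+1, n+2, n+3} \<union> coord_subspace {n, n+1}))
     \<union> (coord_subspace {n+1, n+4, n+5, n+6} - (coord_subspace {n+4, n+5, n+6} \<union> coord_subspace {n+1}))"

lemma zero_notin_example_vectors: "0 \<notin> example_vectors n"
  by (simp add: example_vectors_def)

lemma fscale_in_example_vectors: "c \<noteq> 0 \<Longrightarrow> x \<in> example_vectors n \<Longrightarrow> fscale c x \<in> example_vectors n"
  by (simp add: example_vectors_def)

lemma example_vectors_subset: "n \<ge> 1 \<Longrightarrow> example_vectors n \<subseteq> coord_subspace {1..<n+7}"
  unfolding example_vectors_def
  by (intro Un_least UN_least order_trans[OF Diff_subset] coord_subspace_mono) auto

lemma finite_example_vectors: "finite (example_vectors n :: (nat \<Rightarrow> 'a::{finite,field}) set)"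
  by (simp add: example_vectors_def finite_coord_subspace)

lemma card_example_vectors_inter:
  fixes H :: "(nat \<Rightarrow> 'a::{finite,field}) set"
  assumes "n \<ge> 1"
  shows "int (card (example_vectors n \<inter> H)) =
    (\<Sum>i\<in>{1..<n}. coord_count H {i, n, n+1})
    + coord_count H {n, n+1, n+2, n+3} - coord_count H {n+1, n+2, n+3}
    + coord_count H {n+1, n+4, n+5, n+6} - coord_count H {n+4, n+5, n+6}
    - int n * coord_count H {n, n+1} + coord_count H {}"
proof -
  define P where "P i = (coord_subspace {i, n, n+1} - coord_subspace {n, n+1} :: (nat \<Rightarrow> 'a) set)" for i
  define S where "S = (coord_subspace {n, n+1, n+2, n+3}
    - (coord_subspace {n+1, n+2, n+3} \<union> coord_subspace {n, n+1}) :: (nat \<Rightarrow> 'a) set)"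
  define T where "T = (coord_subspace {n+1, n+4, n+5, n+6}
    - (coord_subspace {n+4, n+5, n+6} \<union> coord_subspace {n+1}) :: (nat \<Rightarrow> 'a) set)"
  have fin: "finite (P i)" "finite S" "finite T" for i
    by (simp_all add: P_def S_def T_def finite_coord_subspace)
  have "example_vectors n \<inter> H = ((\<Union>i\<in>{1..<n}. P i \<inter> H) \<union> (S \<inter> H)) \<union> (T \<inter> H)"
    by (auto simp: example_vectors_def P_def S_def T_def)
  moreover have "(\<Union>i\<in>{1..<n}. P i) \<inter> S = {}" "(\<Union>i\<in>{1..<n}. P i) \<inter> T = {}" "S \<inter> T = {}"
    by (auto simp: P_def S_def T_def coord_subspace_def)
  ultimately have "card (example_vectors n \<inter> H)
      = card (\<Union>i\<in>{1..<n}. P i \<inter> H) + card (S \<inter> H) + card (T \<inter> H)"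
    using fin by (simp add: card_Un_disjoint disjoint_iff)
  also have "card (\<Union>i\<in>{1..<n}. P i \<inter> H) = (\<Sum>i\<in>{1..<n}. card (P i \<inter> H))"
    using fin by (intro card_UN_disjoint) (auto simp: P_def coord_subspace_def)
  finally have "int (card (example_vectors n \<inter> H))
      = (\<Sum>i\<in>{1..<n}. int (card (P i \<inter> H))) + int (card (S \<inter> H)) + int (card (T \<inter> H))"
    by simp
  moreover have "int (card (P i \<inter> H)) = coord_count H {i, n, n+1} - coord_count H {n, n+1}" for i
    using card_coord_subspace_Diff_inter[of "{i, n, n+1}" "{n, n+1}" "{n, n+1}" H] by (simp add: P_def)
  moreover have "int (card (S \<inter> H)) = coord_count H {n, n+1, n+2, n+3} - coord_count H {n+1, n+2, n+3}
      - coord_count H {n, n+1} + coord_count H {n+1}"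
    using card_coord_subspace_Diff_inter[of "{n, n+1, n+2, n+3}" "{n+1, n+2, n+3}" "{n, n+1}" H]
    by (simp add: S_def insert_commute)
  moreover have "int (card (T \<inter> H)) = coord_count H {n+1, n+4, n+5, n+6} - coord_count H {n+4, n+5, n+6}
      - coord_count H {n+1} + coord_count H {}"
    using card_coord_subspace_Diff_inter[of "{n+1, n+4, n+5, n+6}" "{n+4, n+5, n+6}" "{n+1}" H]
    by (simp add: T_def)
  ultimately show ?thesis
    using assms by (simp add: sum_subtractf of_nat_diff algebra_simps)
qed

lemma indicator_singletons_in_span:
  assumes "a \<noteq> b" "a \<noteq> c" "b \<noteq> c"
    and "indicator {a, b} \<in> S" "indicator {a, c} \<in> S" "indicator {a, b, c} \<in> S"
  shows "(\<lambda>j. indicator {j}) ` {a, b, c} \<subseteq> fs.span S"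
proof -
  have "indicator {c} = (indicator {a, b, c} - indicator {a, b} :: nat \<Rightarrow> 'a)"
    "indicator {b} = (indicator {a, b, c} - indicator {a, c} :: nat \<Rightarrow> 'a)"
    "indicator {a} = (indicator {a, b} - indicator {b} :: nat \<Rightarrow> 'a)"
    using assms(1-3) by (auto simp: fun_eq_iff indicator_def)
  then show ?thesis
    using assms(4-6) by (simp add: fs.span_diff fs.span_base)
qed

lemma span_example_vectors:
  assumes "n \<ge> 1"
  shows "fs.span (example_vectors n :: (nat \<Rightarrow> 'a::field) set) = coord_subspace {1..<n+7}"
proof
  show "fs.span (example_vectors n) \<subseteq> coord_subspace {1..<n+7}"
    using example_vectors_subset[OF assms] subspace_coord_subspace by (rule fs.span_minimal)
  let ?V = "example_vectors n :: (nat \<Rightarrow> 'a) set"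
  have "(\<lambda>j. indicator {j}) ` {1..<n} \<subseteq> ?V"
    by (auto simp: example_vectors_def)
  moreover have "(\<lambda>j. indicator {j}) ` {n, n+2, n+3} \<subseteq> fs.span ?V"
    by (rule indicator_singletons_in_span) (auto simp: example_vectors_def)
  moreover have "(\<lambda>j. indicator {j}) ` {n+1, n+4, n+5} \<subseteq> fs.span ?V"
    by (rule indicator_singletons_in_span) (auto simp: example_vectors_def)
  moreover have "(\<lambda>j. indicator {j}) ` {n+1, n+4, n+6} \<subseteq> fs.span ?V"
    by (rule indicator_singletons_in_span) (auto simp: example_vectors_def)
  moreover have "{1..<n+7} = {1..<n} \<union> {n, n+2, n+3} \<union> {n+1, n+4, n+5} \<union> {n+1, n+4, n+6}"
    using assms by auto
  ultimately have "(\<lambda>j. indicator {j}) ` {1..<n+7} \<subseteq> fs.span ?V"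
    using fs.span_superset by (auto simp del: atLeastLessThan_iff)
  then have "fs.span ((\<lambda>j. indicator {j}) ` {1..<n+7}) \<subseteq> fs.span ?V"
    by (intro fs.span_minimal fs.subspace_span)
  then show "coord_subspace {1..<n+7} \<subseteq> fs.span ?V"
    by (simp add: span_indicator_singletons)
qed

lemma card_example_vectors:
  assumes q: "card (UNIV :: 'a::{finite,field} set) = q"
  shows "int (card (example_vectors q :: (nat \<Rightarrow> 'a) set)) = 3 * int q ^ 4 - 4 * int q ^ 3 + 1"
proof -
  let ?U = "UNIV :: (nat \<Rightarrow> 'a) set"
  have q1: "q \<ge> 1"
    using q card_UNIV_field_ge_two[where 'a='a] by simp
  have count: "coord_count ?U I = int q ^ card I" if "finite I" for I
    using that q by (simp add: card_coord_subspace)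
  have "(\<Sum>i\<in>{1..<q}. coord_count ?U {i, q, q+1}) = (\<Sum>i\<in>{1..<q}. int q ^ 3)"
  proof (rule sum.cong[OF refl])
    fix i assume "i \<in> {1..<q}"
    then show "coord_count ?U {i, q, q+1} = int q ^ 3"
      using count[of "{i, q, q+1}"] by (simp add: card_insert_if eval_nat_numeral)
  qed
  also have "\<dots> = (int q - 1) * int q ^ 3"
    using q1 by (simp add: of_nat_diff)
  finally have planes: "(\<Sum>i\<in>{1..<q}. coord_count ?U {i, q, q+1}) = (int q - 1) * int q ^ 3" .
  have solids: "coord_count ?U {q, q+1, q+2, q+3} = int q ^ 4"
    "coord_count ?U {q+1, q+2, q+3} = int q ^ 3"
    "coord_count ?U {q+1, q+4, q+5, q+6} = int q ^ 4"
    "coord_count ?U {q+4, q+5, q+6} = int q ^ 3"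
    "coord_count ?U {q, q+1} = int q ^ 2"
    "coord_count ?U {} = 1"
    by (simp_all only: count finite.emptyI finite_insert) (simp_all add: eval_nat_numeral)
  have "int (card (example_vectors q :: (nat \<Rightarrow> 'a) set)) = int (card (example_vectors q \<inter> ?U))"
    by simp
  also have "\<dots> =
    (\<Sum>i\<in>{1..<q}. coord_count ?U {i, q, q+1})
    + coord_count ?U {q, q+1, q+2, q+3} - coord_count ?U {q+1, q+2, q+3}
    + coord_count ?U {q+1, q+4, q+5, q+6} - coord_count ?U {q+4, q+5, q+6}
    - int q * coord_count ?U {q, q+1} + coord_count ?U {}"
    by (rule card_example_vectors_inter[OF q1])
  also have "\<dots> = (int q - 1) * int q ^ 3 + int q ^ 4 - int q ^ 3 + int q ^ 4 - int q ^ 3 - int q * int q ^ 2 + 1"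
    by (simp only: planes solids)
  also have "\<dots> = 3 * int q ^ 4 - 4 * int q ^ 3 + 1"
    by (simp add: algebra_simps eval_nat_numeral)
  finally show ?thesis .
qed

lemma example_vectors_inter_hyperplane_cong:
  fixes H :: "(nat \<Rightarrow> 'a::{finite,field}) set"
  assumes H: "H \<in> hyperplanes v" and q: "card (UNIV :: 'a set) = q" and v: "q + 7 \<le> v"
  shows "[int (card (example_vectors q \<inter> H)) = 1] (mod int q ^ 2)"
proof -
  have q1: "q \<ge> 1"
    using q card_UNIV_field_ge_two[where 'a='a] by simp
  have count_dvd: "int q ^ (card I - 1) dvd coord_count H I" if "finite I" "I \<subseteq> {..<v}" for I
    using card_power_dvd_card_coord_subspace_inter_hyperplane[OF H that] q
    by (metis of_nat_dvd_iff of_nat_power)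
  have big: "int q ^ 2 dvd coord_count H I" if "finite I" "I \<subseteq> {..<v}" "card I \<ge> 3" for I
  proof -
    have "int q ^ 2 dvd int q ^ (card I - 1)"
      using that(3) by (intro le_imp_power_dvd) simp
    then show ?thesis
      using count_dvd[OF that(1,2)] by (rule dvd_trans)
  qed
  have "int q dvd coord_count H {q, q+1}"
    using count_dvd[of "{q, q+1}"] v by simp
  then obtain t where t: "coord_count H {q, q+1} = int q * t"
    by (rule dvdE)
  have "coord_subspace {} \<inter> H = {0}"
    using H by (auto simp: coord_subspace_empty hyperplanes_def is_subspace_def fs.subspace_0)
  then have empty: "coord_count H {} = 1"
    by simp
  have "int (card (example_vectors q \<inter> H)) - 1 =
    (\<Sum>i\<in>{1..<q}. coord_count H {i, q, q+1})
    + coord_count H {q, q+1, q+2, q+3} - coord_count H {q+1, q+2, q+3}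
    + coord_count H {q+1, q+4, q+5, q+6} - coord_count H {q+4, q+5, q+6} - int q ^ 2 * t"
    using card_example_vectors_inter[OF q1, of H] unfolding t empty by (simp add: power2_eq_square)
  also have "int q ^ 2 dvd \<dots>"
    using v by (intro dvd_diff dvd_add dvd_sum big dvd_mult2) auto
  finally show ?thesis
    by (simp add: cong_iff_dvd_diff)
qed

lemma card_example_points:
  assumes q: "card (UNIV :: 'a::{finite,field} set) = q"
  shows "int (card ((\<lambda>x. fs.span {x}) ` (example_vectors q :: (nat \<Rightarrow> 'a) set)))
    = 3 * int q ^ 3 - int q ^ 2 - int q - 1"
proof -
  let ?V = "example_vectors q :: (nat \<Rightarrow> 'a) set"
  define N where "N = int (card ((\<lambda>x. fs.span {x}) ` ?V))"
  have q2: "q \<ge> 2"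
    using q card_UNIV_field_ge_two[where 'a='a] by simp
  have "card ?V = (card (UNIV :: 'a set) - 1) * card ((\<lambda>x. fs.span {x}) ` ?V)"
    by (rule fs.card_eq_card_span_singletons)
      (simp_all add: finite_example_vectors zero_notin_example_vectors fscale_in_example_vectors)
  then have "int (card ?V) = (int q - 1) * N"
    using q q2 by (simp add: N_def of_nat_diff)
  then have "(int q - 1) * N = (int q - 1) * (3 * int q ^ 3 - int q ^ 2 - int q - 1)"
    using card_example_vectors[OF q] by (simp add: algebra_simps eval_nat_numeral)
  then show ?thesis
    using q2 by (simp add: N_def)
qed

lemma example_points_subset_points:
  assumes "n \<ge> 1"
  shows "(\<lambda>x. fs.span {x}) ` example_vectors n \<subseteq> points (n + 7)"
proof (rule span_singletons_subset_points)
  have "coord_subspace {1..<n+7} \<subseteq> ambient (n + 7)"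
    unfolding ambient_eq_coord_subspace by (rule coord_subspace_mono) auto
  then show "example_vectors n \<subseteq> ambient (n + 7)"
    using example_vectors_subset[OF assms] by blast
qed (rule zero_notin_example_vectors)

lemma divisible_example_points:
  assumes q: "card (UNIV :: 'a::{finite,field} set) = q"
  shows "divisible (q + 7) (int q ^ 2) ((\<lambda>x. fs.span {x}) ` (example_vectors q :: (nat \<Rightarrow> 'a) set))"
proof -
  have "divisible (q + 7) (int (card (UNIV :: 'a set)) ^ 2) ((\<lambda>x. fs.span {x}) ` (example_vectors q :: (nat \<Rightarrow> 'a) set))"
  proof (rule divisible_span_singletons)
    fix H :: "(nat \<Rightarrow> 'a) set" assume "H \<in> hyperplanes (q + 7)"
    then show "[int (card (example_vectors q \<inter> H)) = 1] (mod int (card (UNIV :: 'a set)) ^ 2)"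
      using example_vectors_inter_hyperplane_cong[OF _ q] q by simp
  qed (simp_all add: finite_example_vectors zero_notin_example_vectors fscale_in_example_vectors)
  with q show ?thesis
    by simp
qed

lemma fdim_example_points:
  assumes "n \<ge> 1"
  shows "fdim (\<Union>((\<lambda>x. fs.span {x}) ` (example_vectors n :: (nat \<Rightarrow> 'a::field) set))) = n + 6"
proof -
  have "fdim (\<Union>((\<lambda>x. fs.span {x}) ` (example_vectors n :: (nat \<Rightarrow> 'a) set)))
      = fs.dim (fs.span (example_vectors n :: (nat \<Rightarrow> 'a) set))"
    by (simp add: fdim_def fs.dim_Union_span_singleton)
  also have "\<dots> = n + 6"
    using assms by (simp add: span_example_vectors dim_coord_subspace)
  finally show ?thesis .
qed

theorem corollary4p14:
  fixes q :: nat
  assumes "card (UNIV :: 'a::{finite,field} set) = q"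
  shows "\<exists>(v::nat) (C :: (nat \<Rightarrow> 'a) set set).
           C \<subseteq> points v \<and> divisible v (int q ^ 2) C \<and>
           int (card C) = 3 * int q ^ 3 - int q ^ 2 - int q - 1 \<and>
           max 8 (q + 5) \<le> fdim (\<Union>C) \<and> fdim (\<Union>C) \<le> max 8 (2 * q + 3)"
proof -
  let ?C = "(\<lambda>x. fs.span {x}) ` (example_vectors q :: (nat \<Rightarrow> 'a) set)"
  have q2: "q \<ge> 2"
    using assms card_UNIV_field_ge_two[where 'a='a] by simp
  then have "?C \<subseteq> points (q + 7)" and "fdim (\<Union>?C) = q + 6"
    by (simp_all add: example_points_subset_points fdim_example_points)
  moreover have "divisible (q + 7) (int q ^ 2) ?C"
    using assms by (rule divisible_example_points)
  moreover have "int (card ?C) = 3 * int q ^ 3 - int q ^ 2 - int q - 1"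
    using assms by (rule card_example_points)
  ultimately show ?thesis
    using q2 by (intro exI[of _ "q + 7"] exI[of _ ?C]) auto
qed

end
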